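(* Let $W\in\mathbb{C}[x_1,\dots,x_n]$ be a non-degenerate quasi-homogeneous polynomial with weights $q_i:=\mathrm{wt}(x_i)<1$ for $i=1,\dots,n$. Then there is a constant $C$ depending only on $W$ such that for every $(u_1,\dots,u_n)\in\mathbb{C}^n$ and every $i$, $$|u_i|\le C\Big(\sum_{j=1}^n\Big|\frac{\partial W}{\partial x_j}(u_1,\dots,u_n)\Big|+1\Big)^{\delta_i},\qquad \delta_i=\frac{q_i}{\min_j(1-q_j)}.$$ Moreover, if $q_i\le1/2$ for all $i$ then $\delta_i\le1$ for all $i$, and if $q_i<1/2$ for all $i$ then $\delta_i<1$ for all $i$.
   Context: $W$ is quasi-homogeneous if there are positive integers $d,k_1,\dots,k_n$ with $W(\lambda^{k_1}x_1,\dots,\lambda^{k_n}x_n)=\lambda^dW(x_1,\dots,x_n)$ for all $\lambda\in\mathbb{C}^*$ (taken least); the weight of $x_i$ is $q_i=k_i/d$. $W$ is non-degenerate if the weights $q_i$ are uniquely determined by $W$ and the affine hypersurface $W=0$ has an isolated singularity at the origin (equivalently, the only common zero of all $\partial W/\partial x_j$ is $0$). *)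

theory Defs
  imports Complex_Main
begin

text \<open>Polynomials in n variables x_0,...,x_{n-1} over the complex numbers are represented
by their coefficient functions: W alpha is the coefficient of the monomial
prod_{i<n} x_i^(alpha i).\<close>

definition is_mpoly :: "nat \<Rightarrow> ((nat \<Rightarrow> nat) \<Rightarrow> complex) \<Rightarrow> bool" where
  "is_mpoly n W \<longleftrightarrow> finite {\<alpha>. W \<alpha> \<noteq> 0} \<and> (\<forall>\<alpha>. W \<alpha> \<noteq> 0 \<longrightarrow> (\<forall>i\<ge>n. \<alpha> i = 0))"

definition mpoly_eval :: "nat \<Rightarrow> ((nat \<Rightarrow> nat) \<Rightarrow> complex) \<Rightarrow> (nat \<Rightarrow> complex) \<Rightarrow> complex" where
  "mpoly_eval n W u = (\<Sum>\<alpha>\<in>{\<alpha>. W \<alpha> \<noteq> 0}. W \<alpha> * (\<Prod>i<n. u i ^ \<alpha> i))"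

definition mpoly_pderiv :: "nat \<Rightarrow> ((nat \<Rightarrow> nat) \<Rightarrow> complex) \<Rightarrow> ((nat \<Rightarrow> nat) \<Rightarrow> complex)" where
  "mpoly_pderiv j W = (\<lambda>\<alpha>. of_nat (\<alpha> j + 1) * W (\<alpha>(j := \<alpha> j + 1)))"

definition qh_weights :: "nat \<Rightarrow> ((nat \<Rightarrow> nat) \<Rightarrow> complex) \<Rightarrow> (nat \<Rightarrow> real) \<Rightarrow> bool" where
  "qh_weights n W q \<longleftrightarrow>
     (\<exists>(d::nat) (k::nat \<Rightarrow> nat). d > 0 \<and> (\<forall>i<n. k i > 0) \<and>
        (\<forall>i<n. q i = real (k i) / real d) \<and>
        (\<forall>(t::complex) x. t \<noteq> 0 \<longrightarrow>
            mpoly_eval n W (\<lambda>i. t ^ k i * x i) = t ^ d * mpoly_eval n W x))"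

definition nondegenerate :: "nat \<Rightarrow> ((nat \<Rightarrow> nat) \<Rightarrow> complex) \<Rightarrow> bool" where
  "nondegenerate n W \<longleftrightarrow>
     (\<forall>q q'. qh_weights n W q \<and> qh_weights n W q' \<longrightarrow> (\<forall>i<n. q i = q' i)) \<and>
     (\<forall>u. (\<forall>j<n. mpoly_eval n (mpoly_pderiv j W) u = 0) \<longrightarrow> (\<forall>i<n. u i = 0))"

end

theory Submission
  imports Defs "HOL-Analysis.Analysis"
begin

(* Write q_i = k_i / d with positive integers k_i, d. Any u with some |u_l| > 1 factors as
   u_i = rho^(k_i) v_i with rho > 1 and v on the boundary of the unit polydisc, a compact set on
   which the gradient norm sum_j |dW/dx_j| is bounded below by some c > 0 because the origin is
   the only critical point. As dW/dx_j is quasi-homogeneous of degree d - k_j >= d mu with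
   mu = min_j (1 - q_j), the gradient norm at u is at least c rho^(d mu), whereas
   |u_i| <= rho^(k_i) = (rho^(d mu))^(delta_i). *)

lemma mpoly_eval_cong:
  assumes "\<And>i. i < n \<Longrightarrow> u i = v i"
  shows "mpoly_eval n W u = mpoly_eval n W v"
  unfolding mpoly_eval_def using assms by (intro sum.cong refl prod.cong) auto

lemma mpoly_eval_fun_upd:
  assumes "j < n"
  shows "mpoly_eval n W (x(j := y)) =
    (\<Sum>\<alpha> | W \<alpha> \<noteq> 0. W \<alpha> * y ^ \<alpha> j * (\<Prod>i\<in>{..<n} - {j}. x i ^ \<alpha> i))"
  unfolding mpoly_eval_def using assms
  by (intro sum.cong refl) (simp add: prod.remove[of "{..<n}" j] mult.assoc)

lemma mpoly_eval_pderiv_fun_upd: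
  assumes fin: "finite {\<alpha>. W \<alpha> \<noteq> 0}" and j: "j < n"
  shows "mpoly_eval n (mpoly_pderiv j W) (x(j := y)) =
    (\<Sum>\<alpha> | W \<alpha> \<noteq> 0. W \<alpha> * (of_nat (\<alpha> j) * y ^ (\<alpha> j - 1)) * (\<Prod>i\<in>{..<n} - {j}. x i ^ \<alpha> i))"
    (is "_ = (\<Sum>\<alpha> | W \<alpha> \<noteq> 0. ?term \<alpha>)")
proof -
  define R where "R \<alpha> = (\<Prod>i\<in>{..<n} - {j}. x i ^ \<alpha> i)" for \<alpha> :: "nat \<Rightarrow> nat"
  have R_upd: "R (\<alpha>(j := m)) = R \<alpha>" for \<alpha> m
    unfolding R_def by (intro prod.cong) auto
  have "(\<Sum>\<alpha> | W \<alpha> \<noteq> 0. ?term \<alpha>) = (\<Sum>\<alpha> | W \<alpha> \<noteq> 0 \<and> \<alpha> j \<noteq> 0. ?term \<alpha>)"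
    using fin by (intro sum.mono_neutral_right) auto
  also have "\<dots> = (\<Sum>\<beta> | mpoly_pderiv j W \<beta> \<noteq> 0. mpoly_pderiv j W \<beta> * y ^ \<beta> j * R \<beta>)"
    by (rule sum.reindex_bij_witness[of _ "\<lambda>\<beta>. \<beta>(j := \<beta> j + 1)" "\<lambda>\<alpha>. \<alpha>(j := \<alpha> j - 1)"])
      (auto simp: mpoly_pderiv_def R_upd R_def simp del: of_nat_Suc)
  finally show ?thesis
    using mpoly_eval_fun_upd[OF j] by (simp add: R_def)
qed

lemma has_field_derivative_mpoly_eval:
  assumes "finite {\<alpha>. W \<alpha> \<noteq> 0}" and "j < n"
  shows "((\<lambda>y. mpoly_eval n W (x(j := y))) has_field_derivative
           mpoly_eval n (mpoly_pderiv j W) (x(j := y))) (at y)"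
  unfolding mpoly_eval_pderiv_fun_upd[OF assms] unfolding mpoly_eval_fun_upd[OF assms(2)]
  by (auto intro!: derivative_eq_intros sum.cong)

lemma mpoly_pderiv_quasi_homogeneous:
  fixes x :: "nat \<Rightarrow> complex" and t :: complex
  assumes fin: "finite {\<alpha>. W \<alpha> \<noteq> 0}" and j: "j < n" and t: "t \<noteq> 0"
    and hom: "\<And>t x. t \<noteq> 0 \<Longrightarrow> mpoly_eval n W (\<lambda>i. t ^ k i * x i) = t ^ d * mpoly_eval n W x"
  shows "t ^ k j * mpoly_eval n (mpoly_pderiv j W) (\<lambda>i. t ^ k i * x i)
         = t ^ d * mpoly_eval n (mpoly_pderiv j W) x"
proof -
  define X where "X = (\<lambda>i. t ^ k i * x i)"
  have scaled_upd: "X(j := t ^ k j * z) = (\<lambda>i. t ^ k i * (x(j := z)) i)" for z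
    by (auto simp: X_def)
  have "((\<lambda>z. mpoly_eval n W (X(j := t ^ k j * z))) has_field_derivative
      mpoly_eval n (mpoly_pderiv j W) (X(j := t ^ k j * x j)) * t ^ k j) (at (x j))"
    by (rule DERIV_chain2[OF has_field_derivative_mpoly_eval[OF fin j]])
      (auto intro!: derivative_eq_intros)
  moreover have "((\<lambda>z. mpoly_eval n W (X(j := t ^ k j * z))) has_field_derivative
      t ^ d * mpoly_eval n (mpoly_pderiv j W) (x(j := x j))) (at (x j))"
    unfolding scaled_upd hom[OF t] by (intro DERIV_cmult has_field_derivative_mpoly_eval[OF fin j])
  ultimately have "mpoly_eval n (mpoly_pderiv j W) X * t ^ k j = t ^ d * mpoly_eval n (mpoly_pderiv j W) x"
    by (metis DERIV_unique X_def fun_upd_triv)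
  then show ?thesis
    by (simp add: X_def mult.commute)
qed

definition grad_norm :: "nat \<Rightarrow> ((nat \<Rightarrow> nat) \<Rightarrow> complex) \<Rightarrow> (nat \<Rightarrow> complex) \<Rightarrow> real" where
  "grad_norm n W u = (\<Sum>j<n. norm (mpoly_eval n (mpoly_pderiv j W) u))"

lemma grad_norm_nonneg: "0 \<le> grad_norm n W u"
  unfolding grad_norm_def by (simp add: sum_nonneg)

lemma grad_norm_eq_0_iff: "grad_norm n W u = 0 \<longleftrightarrow> (\<forall>j<n. mpoly_eval n (mpoly_pderiv j W) u = 0)"
  unfolding grad_norm_def by (auto simp: sum_nonneg_eq_0_iff)

lemma continuous_on_coordinate [continuous_intros]: "continuous_on S (\<lambda>x. x i)"
  by (rule continuous_on_product_then_coordinatewise[OF continuous_on_id])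

lemma continuous_on_grad_norm: "continuous_on S (grad_norm n W)"
  unfolding grad_norm_def mpoly_eval_def by (intro continuous_intros)

definition polydisc_boundary :: "nat \<Rightarrow> (nat \<Rightarrow> complex) set" where
  "polydisc_boundary n =
     {v. (\<forall>i<n. norm (v i) \<le> 1) \<and> (\<forall>i\<ge>n. v i = 0) \<and> (\<exists>i<n. norm (v i) = 1)}"

lemma compact_polydisc_boundary: "compact (polydisc_boundary n)"
proof -
  define D where "D = PiE UNIV (\<lambda>i. if i < n then cball (0::complex) 1 else {0})"
  have "compactin (product_topology (\<lambda>i. euclidean) UNIV) D"
    unfolding D_def compactin_PiE by simp
  then have "compact D"
    by (simp add: euclidean_product_topology)
  moreover have "closed {v. norm (v i) = 1}" for i :: nat
    by (intro closed_Collect_eq continuous_intros)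
  moreover have "polydisc_boundary n = (\<Union>i<n. D \<inter> {v. norm (v i) = 1})"
    unfolding polydisc_boundary_def D_def PiE_UNIV_domain by (auto simp: Pi_iff split: if_splits)
  ultimately show ?thesis
    by (simp only:) (intro compact_UN finite_lessThan compact_Int_closed)
qed

lemma grad_norm_bounded_below_on_polydisc_boundary:
  assumes "\<And>u. \<forall>j<n. mpoly_eval n (mpoly_pderiv j W) u = 0 \<Longrightarrow> \<forall>i<n. u i = 0"
  obtains c where "0 < c" "\<And>v. v \<in> polydisc_boundary n \<Longrightarrow> c \<le> grad_norm n W v"
proof (cases "polydisc_boundary n = {}")
  case False
  then obtain v0 where "v0 \<in> polydisc_boundary n"
    and "\<And>v. v \<in> polydisc_boundary n \<Longrightarrow> grad_norm n W v0 \<le> grad_norm n W v"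
    using continuous_attains_inf[OF compact_polydisc_boundary False continuous_on_grad_norm] by blast
  moreover from \<open>v0 \<in> polydisc_boundary n\<close> have "grad_norm n W v0 \<noteq> 0"
    using assms unfolding grad_norm_eq_0_iff polydisc_boundary_def by fastforce
  ultimately show ?thesis
    using that grad_norm_nonneg by (metis order_less_le)
qed (rule that[of 1]; simp)

lemma quasi_homogeneous_polar_decomposition:
  fixes u :: "nat \<Rightarrow> complex"
  assumes k: "\<And>i. i < n \<Longrightarrow> 0 < k i" and l: "l < n" "1 < norm (u l)"
  obtains \<rho> :: real and v where "1 < \<rho>" "v \<in> polydisc_boundary n"
    "\<And>i. i < n \<Longrightarrow> u i = of_real \<rho> ^ k i * v i"
proof -
  define r where "r i = norm (u i) powr (1 / real (k i))" for i
  define \<rho> where "\<rho> = Max (r ` {..<n})"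
  have r_le: "r i \<le> \<rho>" if "i < n" for i
    using that by (simp add: \<rho>_def)
  obtain i0 where i0: "i0 < n" "\<rho> = r i0"
    using Max_in[of "r ` {..<n}"] l(1) unfolding \<rho>_def by fastforce
  have r_powr: "r i powr real (k i) = norm (u i)" if "i < n" for i
    using k[OF that] by (simp add: r_def powr_powr)
  have "1 < r l"
    using l k[OF l(1)] powr_less_mono2[of "1 / real (k l)" 1 "norm (u l)"] by (simp add: r_def)
  then have \<rho>: "1 < \<rho>"
    using r_le[OF l(1)] by linarith
  have u_le: "norm (u i) \<le> \<rho> ^ k i" if "i < n" for i
    using r_le[OF that] \<rho> powr_mono2[of "real (k i)" "r i" \<rho>] r_powr[OF that]
    by (simp add: r_def powr_realpow)
  have u_i0: "norm (u i0) = \<rho> ^ k i0"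
    using r_powr[OF i0(1)] \<rho> by (simp add: i0(2)[symmetric] powr_realpow)
  define v where "v i = (if i < n then u i / of_real \<rho> ^ k i else 0)" for i
  have "v \<in> polydisc_boundary n"
    unfolding polydisc_boundary_def using \<rho> u_le u_i0 i0(1)
    by (auto simp: v_def norm_divide norm_power divide_le_eq_1 intro!: exI[of _ i0])
  moreover have "u i = of_real \<rho> ^ k i * v i" if "i < n" for i
    using that \<rho> by (simp add: v_def)
  ultimately show ?thesis
    using that \<rho> by blast
qed

lemma grad_norm_quasi_homogeneous_scaling:
  fixes \<rho> :: real
  assumes fin: "finite {\<alpha>. W \<alpha> \<noteq> 0}"
    and hom: "\<And>t x. t \<noteq> 0 \<Longrightarrow> mpoly_eval n W (\<lambda>i. t ^ k i * x i) = t ^ d * mpoly_eval n W x"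
    and \<rho>: "1 \<le> \<rho>" and e: "\<And>j. j < n \<Longrightarrow> e \<le> real d - real (k j)"
    and u: "\<And>i. i < n \<Longrightarrow> u i = of_real \<rho> ^ k i * v i"
  shows "\<rho> powr e * grad_norm n W v \<le> grad_norm n W u"
proof -
  have scale: "norm (mpoly_eval n (mpoly_pderiv j W) u) =
      \<rho> powr (real d - real (k j)) * norm (mpoly_eval n (mpoly_pderiv j W) v)" if j: "j < n" for j
  proof -
    have "mpoly_eval n (mpoly_pderiv j W) u = mpoly_eval n (mpoly_pderiv j W) (\<lambda>i. of_real \<rho> ^ k i * v i)"
      using u by (rule mpoly_eval_cong)
    also have "\<dots> = of_real (\<rho> ^ d / \<rho> ^ k j) * mpoly_eval n (mpoly_pderiv j W) v"
      using mpoly_pderiv_quasi_homogeneous[OF fin j _ hom, of "of_real \<rho>" v] \<rho>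
      by (simp add: field_simps)
    finally show ?thesis
      using \<rho> by (simp add: norm_mult norm_divide norm_power powr_diff powr_realpow)
  qed
  have "\<rho> powr e * grad_norm n W v = (\<Sum>j<n. \<rho> powr e * norm (mpoly_eval n (mpoly_pderiv j W) v))"
    by (simp add: grad_norm_def sum_distrib_left)
  also have "\<dots> \<le> (\<Sum>j<n. \<rho> powr (real d - real (k j)) * norm (mpoly_eval n (mpoly_pderiv j W) v))"
    using \<rho> e by (intro sum_mono mult_right_mono powr_mono) auto
  also have "\<dots> = grad_norm n W u"
    by (simp add: grad_norm_def scale)
  finally show ?thesis .
qed

lemma coordinate_bound_by_grad_norm:
  assumes fin: "finite {\<alpha>. W \<alpha> \<noteq> 0}"
    and hom: "\<And>t x. t \<noteq> 0 \<Longrightarrow> mpoly_eval n W (\<lambda>i. t ^ k i * x i) = t ^ d * mpoly_eval n W x"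
    and isolated: "\<And>u. \<forall>j<n. mpoly_eval n (mpoly_pderiv j W) u = 0 \<Longrightarrow> \<forall>i<n. u i = 0"
    and k: "\<And>i. i < n \<Longrightarrow> 0 < k i"
    and e: "0 < e" "\<And>j. j < n \<Longrightarrow> e \<le> real d - real (k j)"
  obtains C where "\<And>u i. i < n \<Longrightarrow> norm (u i) \<le> C * (grad_norm n W u + 1) powr (real (k i) / e)"
proof -
  obtain c where c: "0 < c" "\<And>v. v \<in> polydisc_boundary n \<Longrightarrow> c \<le> grad_norm n W v"
    using grad_norm_bounded_below_on_polydisc_boundary[OF isolated] by blast
  define c' where "c' = min c 1"
  define C where "C = (1 / c') powr (\<Sum>i<n. real (k i) / e)"
  have c': "0 < c'" "1 \<le> 1 / c'"
    using c(1) by (auto simp: c'_def)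
  have "norm (u i) \<le> C * (grad_norm n W u + 1) powr (real (k i) / e)" if i: "i < n" for u i
  proof (cases "\<exists>l<n. 1 < norm (u l)")
    case False
    have "1 \<le> C" "1 \<le> (grad_norm n W u + 1) powr (real (k i) / e)"
      using c' e(1) grad_norm_nonneg by (auto simp: C_def intro!: ge_one_powr_ge_zero sum_nonneg)
    then have "1 \<le> C * (grad_norm n W u + 1) powr (real (k i) / e)"
      using mult_mono[of 1 C 1] by fastforce
    moreover have "norm (u i) \<le> 1"
      using False i not_less by blast
    ultimately show ?thesis
      by linarith
  next
    case True
    then obtain l where l: "l < n" "1 < norm (u l)"
      by blast
    obtain \<rho> v where \<rho>: "1 < \<rho>" and v: "v \<in> polydisc_boundary n"
      and u: "\<And>i. i < n \<Longrightarrow> u i = of_real \<rho> ^ k i * v i"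
      using quasi_homogeneous_polar_decomposition[where u = u and k = k and n = n, OF k l] by blast
    have "\<rho> powr e * c' \<le> \<rho> powr e * grad_norm n W v"
      using c(2)[OF v] by (intro mult_left_mono) (auto simp: c'_def)
    also have "\<dots> \<le> grad_norm n W u"
      using grad_norm_quasi_homogeneous_scaling[OF fin hom _ e(2) u] \<rho> by simp
    finally have \<rho>_bound: "\<rho> powr e \<le> (grad_norm n W u + 1) / c'"
      using c'(1) by (simp add: pos_le_divide_eq)
    have "norm (u i) \<le> \<rho> ^ k i"
      using v i \<rho> by (simp add: u[OF i] norm_mult norm_power polydisc_boundary_def mult_left_le)
    also have "\<dots> = (\<rho> powr e) powr (real (k i) / e)"
      using \<rho> e(1) by (simp add: powr_powr powr_realpow)
    also have "\<dots> \<le> ((grad_norm n W u + 1) / c') powr (real (k i) / e)"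
      using \<rho>_bound e(1) by (intro powr_mono2) auto
    also have "\<dots> = (1 / c') powr (real (k i) / e) * (grad_norm n W u + 1) powr (real (k i) / e)"
      using c'(1) grad_norm_nonneg by (simp add: powr_mult[symmetric])
    also have "\<dots> \<le> C * (grad_norm n W u + 1) powr (real (k i) / e)"
      unfolding C_def using c'(2) e(1) i
      by (intro mult_right_mono powr_mono member_le_sum) auto
    finally show ?thesis .
  qed
  then show ?thesis
    using that by blast
qed

lemma div_Min_complement_le_one:
  fixes q :: "nat \<Rightarrow> real"
  assumes "i < n" and "\<forall>j<n. q j \<le> 1/2"
  shows "q i / Min ((\<lambda>j. 1 - q j) ` {..<n}) \<le> 1"
proof -
  have "1/2 \<le> Min ((\<lambda>j. 1 - q j) ` {..<n})"
    using assms by (subst Min_ge_iff) auto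
  moreover have "q i \<le> 1/2"
    using assms by blast
  ultimately show ?thesis
    by (simp add: divide_le_eq_1)
qed

lemma div_Min_complement_less_one:
  fixes q :: "nat \<Rightarrow> real"
  assumes "i < n" and "\<forall>j<n. q j < 1/2"
  shows "q i / Min ((\<lambda>j. 1 - q j) ` {..<n}) < 1"
proof -
  have "1/2 < Min ((\<lambda>j. 1 - q j) ` {..<n})"
    using assms by (subst Min_gr_iff) auto
  moreover have "q i < 1/2"
    using assms by blast
  ultimately show ?thesis
    by (simp add: divide_less_eq_1)
qed

theorem theorem5p8:
  fixes n :: nat and W :: "(nat \<Rightarrow> nat) \<Rightarrow> complex" and q \<delta> :: "nat \<Rightarrow> real"
  assumes "is_mpoly n W"
    and "qh_weights n W q"
    and "nondegenerate n W"
    and "\<forall>i<n. q i < 1"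
    and "\<delta> = (\<lambda>i. q i / Min ((\<lambda>j. 1 - q j) ` {..<n}))"
  shows "(\<exists>C::real. \<forall>u::nat \<Rightarrow> complex. \<forall>i<n.
            norm (u i) \<le> C * ((\<Sum>j<n. norm (mpoly_eval n (mpoly_pderiv j W) u)) + 1) powr \<delta> i)
         \<and> ((\<forall>i<n. q i \<le> 1/2) \<longrightarrow> (\<forall>i<n. \<delta> i \<le> 1))
         \<and> ((\<forall>i<n. q i < 1/2) \<longrightarrow> (\<forall>i<n. \<delta> i < 1))"
proof -
  obtain d k where d: "0 < d" and k: "\<And>i. i < n \<Longrightarrow> 0 < k i"
    and qk: "\<And>i. i < n \<Longrightarrow> q i = real (k i) / real d"
    and hom: "\<And>t x. t \<noteq> 0 \<Longrightarrow> mpoly_eval n W (\<lambda>i. t ^ k i * x i) = t ^ d * mpoly_eval n W x"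
    using assms(2) unfolding qh_weights_def by metis
  have fin: "finite {\<alpha>. W \<alpha> \<noteq> 0}"
    using assms(1) by (simp add: is_mpoly_def)
  have isolated: "\<And>u. \<forall>j<n. mpoly_eval n (mpoly_pderiv j W) u = 0 \<Longrightarrow> \<forall>i<n. u i = 0"
    using assms(3) by (simp add: nondegenerate_def)
  define \<mu> where "\<mu> = Min ((\<lambda>j. 1 - q j) ` {..<n})"
  have "\<exists>C. \<forall>u. \<forall>i<n. norm (u i) \<le> C * (grad_norm n W u + 1) powr \<delta> i"
  proof (cases "n = 0")
    case False
    have "\<mu> \<in> (\<lambda>j. 1 - q j) ` {..<n}"
      using False unfolding \<mu>_def by (intro Min_in) auto
    then have "0 < real d * \<mu>"
      using assms(4) d by auto
    moreover have "real d * \<mu> \<le> real d - real (k j)" if "j < n" for j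
    proof -
      have "\<mu> \<le> 1 - q j"
        unfolding \<mu>_def using that by (intro Min_le) auto
      then show ?thesis
        using d qk[OF that] mult_left_mono[of \<mu> "1 - q j" "real d"] by (simp add: right_diff_distrib)
    qed
    ultimately obtain C where
      "\<And>u i. i < n \<Longrightarrow> norm (u i) \<le> C * (grad_norm n W u + 1) powr (real (k i) / (real d * \<mu>))"
      using coordinate_bound_by_grad_norm[OF fin hom isolated k] by metis
    moreover have "\<delta> i = real (k i) / (real d * \<mu>)" if "i < n" for i
      using qk[OF that] by (simp add: assms(5) \<mu>_def)
    ultimately show ?thesis
      by metis
  qed simp
  then show ?thesis
    using div_Min_complement_le_one div_Min_complement_less_one
    unfolding grad_norm_def assms(5) by blast
qed

end
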